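(* Let $\rho$ be either smooth tempered of exponential type or Gaussian, $\rho(x)=\beta e^{-\alpha|x|^2}$. There exists $C>0$ such that for every $n\in\mathbb N$, $h\in(0,1]$, $\tau>0$ and every $x\in\mathbb R^d$ with $|x|\ge\tau+(n+1)h$, $$\|T_h^n(x,dy)-d\nu_h\|_{TV}\ge1-Cp(\tau),$$ where $p(\tau)=e^{-2\alpha\tau(\tau-h)}$ in the Gaussian case and $p(\tau)=\int_{|y|\ge\tau}\rho(y)^2dy$ in the tempered case.
   Context: $\rho\in C^1(\mathbb R^d)$ strictly positive, bounded, $\int\rho\,dx=1$. Smooth tempered of exponential type means $\rho\in C^\infty$ and there are $C_\beta>0$, $R>0$, $\kappa_0>0$ with $|\partial^\beta\rho(x)|\le C_\beta\rho(x)$ for all $\beta$ and $\sum_i\partial_{x_i}^2\rho(x)\ge\kappa_0\rho(x)$ for $|x|\ge R$. $m_h(x)=\int_{|y-x|<h}\rho(y)dy$. $T_h$ is the Markov operator $T_hf(x)=\frac1{m_h(x)}\int_{|y-x|<h}f(y)\rho(y)dy$, with kernel $t_h(x,dy)=\frac{\rho(y)}{m_h(x)}\mathbf 1_{|x-y|<h}dy$; $T_h^n(x,dy)$ is the $n$-step kernel. $d\nu_h=Z_h^{-1}m_h(x)\rho(x)dx$ is the stationary probability measure ($Z_h$ normalizing). For probability measures, $\|\mu-\nu\|_{TV}=\sup_A|\mu(A)-\nu(A)|$ over measurable $A$. *)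

theory Defs
  imports "HOL-Analysis.Analysis"
begin

definition partial_dir :: "'a::euclidean_space \<Rightarrow> ('a \<Rightarrow> real) \<Rightarrow> 'a \<Rightarrow> real" where
  "partial_dir i f x = deriv (\<lambda>t. f (x + t *\<^sub>R i)) 0"

fun partials :: "'a::euclidean_space list \<Rightarrow> ('a \<Rightarrow> real) \<Rightarrow> 'a \<Rightarrow> real" where
  "partials [] f = f"
| "partials (i # is) f = partial_dir i (partials is f)"

definition C1_fun :: "('a::euclidean_space \<Rightarrow> real) \<Rightarrow> bool" where
  "C1_fun f \<longleftrightarrow> (\<forall>x. f differentiable at x) \<and> (\<forall>i\<in>Basis. continuous_on UNIV (partial_dir i f))"

definition smooth_fun :: "('a::euclidean_space \<Rightarrow> real) \<Rightarrow> bool" where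
  "smooth_fun f \<longleftrightarrow> (\<forall>is. set is \<subseteq> Basis \<longrightarrow> (\<forall>x. partials is f differentiable at x))"

definition standing_density :: "('a::euclidean_space \<Rightarrow> real) \<Rightarrow> bool" where
  "standing_density \<rho> \<longleftrightarrow> C1_fun \<rho> \<and> (\<forall>x. \<rho> x > 0) \<and> bounded (range \<rho>)
     \<and> integrable lborel \<rho> \<and> (LINT x|lborel. \<rho> x) = 1"

definition tempered_exp :: "('a::euclidean_space \<Rightarrow> real) \<Rightarrow> bool" where
  "tempered_exp \<rho> \<longleftrightarrow> smooth_fun \<rho>
     \<and> (\<forall>is. set is \<subseteq> Basis \<longrightarrow> (\<exists>C>0. \<forall>x. \<bar>partials is \<rho> x\<bar> \<le> C * \<rho> x))
     \<and> (\<exists>R>0. \<exists>\<kappa>0>0. \<forall>x. norm x \<ge> R \<longrightarrow> (\<Sum>i\<in>Basis. partials [i, i] \<rho> x) \<ge> \<kappa>0 * \<rho> x)"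

definition mh :: "('a::euclidean_space \<Rightarrow> real) \<Rightarrow> real \<Rightarrow> 'a \<Rightarrow> real" where
  "mh \<rho> h x = (LINT y:ball x h|lborel. \<rho> y)"

fun Tn :: "('a::euclidean_space \<Rightarrow> real) \<Rightarrow> real \<Rightarrow> nat \<Rightarrow> 'a \<Rightarrow> 'a set \<Rightarrow> real" where
  "Tn \<rho> h 0 x A = indicator A x"
| "Tn \<rho> h (Suc n) x A = (LINT y:ball x h|lborel. Tn \<rho> h n y A * \<rho> y) / mh \<rho> h x"

definition nu_h :: "('a::euclidean_space \<Rightarrow> real) \<Rightarrow> real \<Rightarrow> 'a set \<Rightarrow> real" where
  "nu_h \<rho> h A = (LINT y:A|lborel. mh \<rho> h y * \<rho> y) / (LINT y|lborel. mh \<rho> h y * \<rho> y)"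

definition tv_dist :: "('a::euclidean_space set \<Rightarrow> real) \<Rightarrow> ('a set \<Rightarrow> real) \<Rightarrow> real" where
  "tv_dist \<mu> \<nu> = Sup {\<bar>\<mu> A - \<nu> A\<bar> | A. A \<in> sets borel}"

end

theory Submission
  imports Defs
begin

text \<open>Steps of the walk have length less than \<open>h\<close>, so from \<open>x\<close> with \<open>|x| \<ge> \<tau> + (n + 1) h\<close> it
  stays in \<open>cball x (n h)\<close> for \<open>n\<close> steps: \<open>T\<^sub>h\<^sup>n(x, A) = 1\<close> for every \<open>A\<close> containing that ball, and
  the total variation distance is at least \<open>1 - \<nu>\<^sub>h(A)\<close>. It remains to find such an \<open>A\<close>, lying at
  distance \<open>\<ge> \<tau> + h\<close> from the origin, of small \<open>\<nu>\<^sub>h\<close>-measure.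

  For a tempered density, \<open>|\<partial>\<^sub>i\<rho>| \<le> C \<rho>\<close> makes \<open>ln \<rho>\<close> Lipschitz, so \<open>\<rho>\<close> satisfies a Harnack
  inequality on unit balls. Hence \<open>m\<^sub>h(y)\<close> is comparable to \<open>\<rho>(y) |B\<^sub>h|\<close>, the density \<open>m\<^sub>h \<rho>\<close> of
  \<open>\<nu>\<^sub>h\<close> is comparable to \<open>|B\<^sub>h| \<rho>\<^sup>2\<close>, and \<open>A = {|y| \<ge> \<tau>}\<close> works.

  For the Gaussian take the half-space \<open>A = {y \<bullet> u \<ge> \<tau> + h}\<close> with \<open>u = x / |x|\<close>: translating it by
  \<open>-(\<tau> + h) u\<close> onto \<open>{y \<bullet> u \<ge> 0}\<close> increases \<open>m\<^sub>h \<rho>\<close> pointwise by a factor at least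
  \<open>exp (2 \<alpha> \<tau> (\<tau> + h))\<close>, so \<open>\<nu>\<^sub>h(A) \<le> exp (-2 \<alpha> \<tau> (\<tau> + h))\<close>.\<close>

lemma partial_dir_eq_derivative:
  assumes "(f has_derivative D) (at x)"
  shows "partial_dir i f x = D i"
proof -
  have "((\<lambda>t::real. x + t *\<^sub>R i) has_derivative (\<lambda>t. t *\<^sub>R i)) (at 0)"
    by (auto intro!: derivative_eq_intros)
  moreover have "(f has_derivative D) (at (x + 0 *\<^sub>R i))"
    using assms by simp
  ultimately have "((\<lambda>t. f (x + t *\<^sub>R i)) has_derivative (\<lambda>t. D (t *\<^sub>R i))) (at 0)"
    by (rule diff_chain_at[unfolded o_def])
  moreover have "(\<lambda>t. D (t *\<^sub>R i)) = (*) (D i)"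
    using has_derivative_linear[OF assms] by (simp add: fun_eq_iff linear_scale mult.commute)
  ultimately have "((\<lambda>t. f (x + t *\<^sub>R i)) has_field_derivative D i) (at 0)"
    by (simp add: has_field_derivative_def)
  then show ?thesis unfolding partial_dir_def by (rule DERIV_imp_deriv)
qed

lemma abs_linear_le_sum_Basis:
  fixes D :: "'a::euclidean_space \<Rightarrow> real"
  assumes "linear D"
  shows "\<bar>D v\<bar> \<le> (\<Sum>i\<in>Basis. \<bar>D i\<bar>) * norm v"
proof -
  have "D v = D (\<Sum>i\<in>Basis. (v \<bullet> i) *\<^sub>R i)" by (simp add: euclidean_representation)
  also have "\<dots> = (\<Sum>i\<in>Basis. (v \<bullet> i) * D i)"
    using assms by (simp add: linear_sum linear_scale o_def)
  finally have "\<bar>D v\<bar> \<le> (\<Sum>i\<in>Basis. \<bar>v \<bullet> i\<bar> * \<bar>D i\<bar>)"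
    by (metis (no_types, lifting) abs_mult sum.cong sum_abs)
  also have "\<dots> \<le> (\<Sum>i\<in>Basis. norm v * \<bar>D i\<bar>)"
    by (intro sum_mono mult_right_mono) (auto simp: Basis_le_norm)
  finally show ?thesis by (simp add: sum_distrib_left mult.commute)
qed

lemma standing_density_pos: "standing_density \<rho> \<Longrightarrow> \<rho> x > 0"
  by (simp add: standing_density_def)

lemma standing_density_integrable: "standing_density \<rho> \<Longrightarrow> integrable lborel \<rho>"
  by (simp add: standing_density_def)

lemma standing_density_bounded_above: "standing_density \<rho> \<Longrightarrow> \<exists>B. \<forall>x. \<rho> x \<le> B"
  by (auto simp: standing_density_def bounded_real abs_le_iff)

lemma standing_density_differentiable: "standing_density \<rho> \<Longrightarrow> \<rho> differentiable at x"
  by (simp add: standing_density_def C1_fun_def)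

lemma tempered_exp_ln_lipschitz:
  fixes \<rho> :: "'a::euclidean_space \<Rightarrow> real"
  assumes sd: "standing_density \<rho>" and te: "tempered_exp \<rho>"
  obtains M where "\<And>y z. \<bar>ln (\<rho> z) - ln (\<rho> y)\<bar> \<le> M * norm (z - y)"
proof -
  define D where "D x = frechet_derivative \<rho> (at x)" for x
  have D: "(\<rho> has_derivative D x) (at x)" for x
    unfolding D_def using standing_density_differentiable[OF sd] frechet_derivative_works by blast
  have "\<forall>i\<in>Basis. \<exists>C. \<forall>x. \<bar>D x i\<bar> \<le> C * \<rho> x"
  proof
    fix i :: 'a assume "i \<in> Basis"
    then obtain C where "\<forall>x. \<bar>partials [i] \<rho> x\<bar> \<le> C * \<rho> x"
      using te unfolding tempered_exp_def by (metis empty_subsetI insert_subset list.set)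
    then show "\<exists>C. \<forall>x. \<bar>D x i\<bar> \<le> C * \<rho> x"
      using partial_dir_eq_derivative[OF D] by auto
  qed
  then obtain C where C: "\<And>i x. i \<in> Basis \<Longrightarrow> \<bar>D x i\<bar> \<le> C i * \<rho> x"
    by metis
  define M where "M = (\<Sum>i\<in>Basis. \<bar>C i\<bar>)"
  have "onorm (\<lambda>v. inverse (\<rho> x) * D x v) \<le> M" for x
  proof (rule onorm_le)
    fix v :: 'a
    have "(\<Sum>i\<in>Basis. \<bar>D x i\<bar>) \<le> (\<Sum>i\<in>Basis. \<bar>C i\<bar> * \<rho> x)"
      using C standing_density_pos[OF sd, of x]
      by (intro sum_mono order.trans[OF C]) (auto intro: mult_right_mono)
    then have "(\<Sum>i\<in>Basis. \<bar>D x i\<bar>) * norm v \<le> (\<Sum>i\<in>Basis. \<bar>C i\<bar> * \<rho> x) * norm v"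
      by (rule mult_right_mono) simp
    also have "\<dots> = M * \<rho> x * norm v"
      by (simp add: M_def sum_distrib_right)
    finally have "(\<Sum>i\<in>Basis. \<bar>D x i\<bar>) * norm v \<le> M * \<rho> x * norm v" .
    then have "\<bar>D x v\<bar> \<le> M * \<rho> x * norm v"
      using abs_linear_le_sum_Basis[OF has_derivative_linear[OF D], of x v] by linarith
    then show "norm (inverse (\<rho> x) * D x v) \<le> M * norm v"
      using standing_density_pos[OF sd, of x] by (simp add: abs_mult field_simps)
  qed
  moreover have "((\<lambda>x. ln (\<rho> x)) has_derivative (\<lambda>v. inverse (\<rho> x) * D x v)) (at x within UNIV)" for x
    using D[of x] standing_density_pos[OF sd, of x] by (auto intro!: derivative_eq_intros)
  ultimately have "norm (ln (\<rho> z) - ln (\<rho> y)) \<le> M * norm (z - y)" for y z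
    by (intro differentiable_bound[OF convex_UNIV]) auto
  then have "\<bar>ln (\<rho> z) - ln (\<rho> y)\<bar> \<le> M * norm (z - y)" for y z
    by simp
  then show thesis
    by (rule that)
qed

lemma tempered_exp_harnack:
  fixes \<rho> :: "'a::euclidean_space \<Rightarrow> real"
  assumes sd: "standing_density \<rho>" and te: "tempered_exp \<rho>"
  obtains K where "K > 0" "\<And>y z. dist y z < 1 \<Longrightarrow> \<rho> z \<le> K * \<rho> y"
proof -
  obtain M where M: "\<And>y z. \<bar>ln (\<rho> z) - ln (\<rho> y)\<bar> \<le> M * norm (z - y)"
    using tempered_exp_ln_lipschitz[OF sd te] by blast
  have "\<rho> z \<le> exp \<bar>M\<bar> * \<rho> y" if "dist y z < 1" for y z
  proof -
    have "M * norm (z - y) \<le> \<bar>M\<bar> * norm (z - y)"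
      by (simp add: mult_right_mono)
    also have "\<dots> \<le> \<bar>M\<bar>"
      using that by (simp add: dist_norm norm_minus_commute mult_left_le)
    finally have "M * norm (z - y) \<le> \<bar>M\<bar>" .
    then have "ln (\<rho> z) \<le> ln (\<rho> y) + \<bar>M\<bar>"
      using M[of z y] by linarith
    then have "exp (ln (\<rho> z)) \<le> exp (ln (\<rho> y) + \<bar>M\<bar>)" by simp
    then show ?thesis using standing_density_pos[OF sd] by (simp add: exp_add mult.commute)
  qed
  then show thesis using that[of "exp \<bar>M\<bar>"] by simp
qed

lemma standing_density_set_integrable:
  fixes \<rho> :: "'a::euclidean_space \<Rightarrow> real"
  assumes "standing_density \<rho>" "A \<in> sets borel"
  shows "set_integrable lborel A \<rho>"
  unfolding set_integrable_def
  using assms standing_density_integrable by (intro integrable_mult_indicator) auto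

lemma mh_nonneg:
  assumes "standing_density \<rho>"
  shows "mh \<rho> h x \<ge> 0"
  unfolding mh_def set_lebesgue_integral_def using standing_density_pos[OF assms]
  by (intro Bochner_Integration.integral_nonneg) (simp add: less_imp_le)

lemma mh_pos:
  fixes \<rho> :: "'a::euclidean_space \<Rightarrow> real"
  assumes sd: "standing_density \<rho>" and h: "h > 0"
  shows "mh \<rho> h x > 0"
proof (rule ccontr)
  assume "\<not> mh \<rho> h x > 0"
  then have "mh \<rho> h x = 0"
    using mh_nonneg[OF sd, of h x] by simp
  then have "AE y in lborel. indicator (ball x h) y *\<^sub>R \<rho> y = 0"
    using standing_density_set_integrable[OF sd] standing_density_pos[OF sd]
    unfolding mh_def set_lebesgue_integral_def set_integrable_def
    by (subst integral_nonneg_eq_0_iff_AE[symmetric]) (auto simp: less_imp_le)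
  moreover have "y \<notin> ball x h" if "indicator (ball x h) y *\<^sub>R \<rho> y = 0" for y
    using that standing_density_pos[OF sd, of y] by (auto simp: indicator_def split: if_splits)
  ultimately have "AE y in lborel. y \<notin> ball x h"
    by (rule eventually_mono)
  then have "emeasure lborel (ball x h) = 0"
    by (subst (asm) AE_iff_measurable[where N="ball x h"]) auto
  then have "measure lborel (ball x h) = 0"
    by (simp add: measure_def)
  then show False
    using h by simp
qed

lemma abs_Tn_le_1:
  fixes \<rho> :: "'a::euclidean_space \<Rightarrow> real"
  assumes sd: "standing_density \<rho>"
  shows "\<bar>Tn \<rho> h n y A\<bar> \<le> 1"
proof (induction n arbitrary: y)
  case 0
  then show ?case by (simp add: indicator_def)
next
  case (Suc n)
  let ?g = "\<lambda>z. indicator (ball y h) z *\<^sub>R (Tn \<rho> h n z A * \<rho> z)"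
  have "\<bar>LINT z|lborel. ?g z\<bar> \<le> mh \<rho> h y"
  proof (cases "integrable lborel ?g")
    case True
    show ?thesis unfolding mh_def set_lebesgue_integral_def
    proof (rule integral_abs_bound_integral[OF True])
      show "integrable lborel (\<lambda>z. indicator (ball y h) z *\<^sub>R \<rho> z)"
        using standing_density_set_integrable[OF sd] by (simp add: set_integrable_def)
      fix z
      have "\<bar>Tn \<rho> h n z A * \<rho> z\<bar> \<le> \<rho> z"
        using Suc.IH[of z] standing_density_pos[OF sd, of z]
        by (simp add: abs_mult mult_left_le_one_le)
      then show "\<bar>?g z\<bar> \<le> indicator (ball y h) z *\<^sub>R \<rho> z"
        by (simp add: indicator_def)
    qed
  next
    case False
    then show ?thesis using mh_nonneg[OF sd] by (simp add: not_integrable_integral_eq)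
  qed
  then show ?case
    using mh_nonneg[OF sd, of h y]
    by (cases "mh \<rho> h y = 0") (auto simp: set_lebesgue_integral_def abs_divide divide_le_eq_1)
qed

lemma Tn_eq_1:
  fixes \<rho> :: "'a::euclidean_space \<Rightarrow> real"
  assumes sd: "standing_density \<rho>" and h: "h > 0"
  shows "cball y (real n * h) \<subseteq> A \<Longrightarrow> Tn \<rho> h n y A = 1"
proof (induction n arbitrary: y)
  case 0
  then show ?case by (simp add: indicator_def)
next
  case (Suc n)
  have "Tn \<rho> h n z A = 1" if "z \<in> ball y h" for z
  proof (rule Suc.IH)
    show "cball z (real n * h) \<subseteq> A"
    proof
      fix w assume "w \<in> cball z (real n * h)"
      then have "dist y w < real (Suc n) * h"
        using that dist_triangle[of y w z] by (auto simp: algebra_simps)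
      then show "w \<in> A" using Suc.prems by auto
    qed
  qed
  then have "(LINT z:ball y h|lborel. Tn \<rho> h n z A * \<rho> z) = mh \<rho> h y"
    unfolding mh_def by (intro set_lebesgue_integral_cong) auto
  then show ?case using mh_pos[OF sd h, of y] by simp
qed

lemma abs_nu_h_le_1:
  fixes \<rho> :: "'a::euclidean_space \<Rightarrow> real"
  assumes sd: "standing_density \<rho>"
  shows "\<bar>nu_h \<rho> h A\<bar> \<le> 1"
proof -
  have nonneg: "mh \<rho> h y * \<rho> y \<ge> 0" for y
    using mh_nonneg[OF sd] standing_density_pos[OF sd, of y] by simp
  show ?thesis
  proof (cases "integrable lborel (\<lambda>y. mh \<rho> h y * \<rho> y)")
    case True
    have "(LINT y:A|lborel. mh \<rho> h y * \<rho> y) \<le> (LINT y|lborel. mh \<rho> h y * \<rho> y)"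
      unfolding set_lebesgue_integral_def
      using nonneg by (intro integral_mono'[OF True]) (auto simp: indicator_def)
    moreover have "(LINT y:A|lborel. mh \<rho> h y * \<rho> y) \<ge> 0"
      unfolding set_lebesgue_integral_def using nonneg
      by (intro Bochner_Integration.integral_nonneg) simp
    ultimately show ?thesis
      by (auto simp: nu_h_def abs_divide divide_le_eq_1)
  next
    case False
    then show ?thesis by (simp add: nu_h_def not_integrable_integral_eq)
  qed
qed

lemma tv_dist_Tn_nu_h_ge:
  fixes \<rho> :: "'a::euclidean_space \<Rightarrow> real"
  assumes sd: "standing_density \<rho>" and h: "h > 0"
    and A: "A \<in> sets borel" "cball x (real n * h) \<subseteq> A"
  shows "1 - nu_h \<rho> h A \<le> tv_dist (Tn \<rho> h n x) (nu_h \<rho> h)"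
proof -
  have "\<bar>Tn \<rho> h n x A - nu_h \<rho> h A\<bar> \<le> tv_dist (Tn \<rho> h n x) (nu_h \<rho> h)"
    unfolding tv_dist_def
  proof (rule cSup_upper)
    show "bdd_above {\<bar>Tn \<rho> h n x B - nu_h \<rho> h B\<bar> |B. B \<in> sets borel}"
    proof (rule bdd_aboveI[where M=2], clarify)
      fix B
      show "\<bar>Tn \<rho> h n x B - nu_h \<rho> h B\<bar> \<le> 2"
        using abs_Tn_le_1[OF sd, of h n x B] abs_nu_h_le_1[OF sd, of h B] by linarith
    qed
  qed (use A in blast)
  then show ?thesis
    using Tn_eq_1[OF sd h A(2)] by simp
qed

text \<open>If \<open>m\<^sub>h \<rho>\<close> is not integrable, the normalising integral in \<open>nu_h\<close> is \<open>0\<close> and so is \<open>nu_h \<rho> h A\<close>.\<close>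

lemma nu_h_le:
  fixes \<rho> :: "'a::euclidean_space \<Rightarrow> real"
  assumes sd: "standing_density \<rho>" and E: "E \<ge> 0"
    and le: "integrable lborel (\<lambda>y. mh \<rho> h y * \<rho> y) \<Longrightarrow>
      (LINT y:A|lborel. mh \<rho> h y * \<rho> y) \<le> E * (LINT y|lborel. mh \<rho> h y * \<rho> y)"
  shows "nu_h \<rho> h A \<le> E"
proof (cases "integrable lborel (\<lambda>y. mh \<rho> h y * \<rho> y)")
  case True
  have "(LINT y|lborel. mh \<rho> h y * \<rho> y) \<ge> 0"
    using mh_nonneg[OF sd] standing_density_pos[OF sd]
    by (intro Bochner_Integration.integral_nonneg) (simp add: less_imp_le)
  then show ?thesis
    using le[OF True] E by (cases "(LINT y|lborel. mh \<rho> h y * \<rho> y) = 0")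
      (auto simp: nu_h_def divide_le_eq)
next
  case False
  then show ?thesis
    using E by (simp add: nu_h_def not_integrable_integral_eq)
qed

lemma integrable_power2_density:
  fixes \<rho> :: "'a::euclidean_space \<Rightarrow> real"
  assumes sd: "standing_density \<rho>"
  shows "integrable lborel (\<lambda>y. (\<rho> y)\<^sup>2)"
proof -
  obtain B where B: "\<And>x. \<rho> x \<le> B"
    using standing_density_bounded_above[OF sd] by blast
  show ?thesis
  proof (rule Bochner_Integration.integrable_bound)
    show "integrable lborel (\<lambda>y. B * \<rho> y)"
      using standing_density_integrable[OF sd] by simp
    show "(\<lambda>y. (\<rho> y)\<^sup>2) \<in> borel_measurable lborel"
      using standing_density_integrable[OF sd] by measurable
    have "\<rho> x * \<rho> x \<le> B * \<rho> x" for x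
      using B[of x] standing_density_pos[OF sd, of x] by (simp add: mult_right_mono)
    then have "\<rho> x * \<rho> x \<le> \<bar>B * \<rho> x\<bar>" for x
      using order_trans abs_ge_self by blast
    then show "AE x in lborel. norm ((\<rho> x)\<^sup>2) \<le> norm (B * \<rho> x)"
      by (intro AE_I2) (simp add: power2_eq_square)
  qed
qed

lemma integral_power2_density_pos:
  fixes \<rho> :: "'a::euclidean_space \<Rightarrow> real"
  assumes sd: "standing_density \<rho>"
  shows "(LINT y|lborel. (\<rho> y)\<^sup>2) > 0"
proof (rule ccontr)
  assume "\<not> (LINT y|lborel. (\<rho> y)\<^sup>2) > 0"
  moreover have "(LINT y|lborel. (\<rho> y)\<^sup>2) \<ge> 0"
    by (intro Bochner_Integration.integral_nonneg) simp
  ultimately have "(LINT y|lborel. (\<rho> y)\<^sup>2) = 0"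
    by simp
  then have "AE y in lborel. (\<rho> y)\<^sup>2 = 0"
    using integral_nonneg_eq_0_iff_AE[OF integrable_power2_density[OF sd]] by simp
  then have "emeasure lborel (UNIV :: 'a set) = 0"
    using standing_density_pos[OF sd]
    by (subst (asm) AE_iff_measurable[where N=UNIV]) (auto simp: less_le)
  then show False by simp
qed

lemma mh_harnack_bounds:
  fixes \<rho> :: "'a::euclidean_space \<Rightarrow> real"
  assumes sd: "standing_density \<rho>" and h: "h > 0" and K: "K > 0"
    and harnack: "\<And>y z. dist y z < h \<Longrightarrow> \<rho> z \<le> K * \<rho> y"
  shows "mh \<rho> h y \<le> K * \<rho> y * measure lborel (ball (0::'a) h)"
    and "\<rho> y / K * measure lborel (ball (0::'a) h) \<le> mh \<rho> h y"
proof -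
  have const: "(LINT z:ball y h|lborel. c) = c * measure lborel (ball (0::'a) h)" for c :: real
  proof -
    have "(LINT z:ball y h|lborel. c) = measure lborel (ball y h) *\<^sub>R c"
      using emeasure_lborel_ball_finite[of y h] by (intro set_integral_const) auto
    then show ?thesis
      using h by (simp add: content_ball)
  qed
  have const_int: "set_integrable lborel (ball y h) (\<lambda>z. c :: real)" for c
    using emeasure_lborel_ball_finite[of y h] by (simp add: set_integrable_def)
  have \<rho>_int: "set_integrable lborel (ball y h) \<rho>"
    using standing_density_set_integrable[OF sd] by simp
  have "mh \<rho> h y \<le> (LINT z:ball y h|lborel. K * \<rho> y)"
    unfolding mh_def using harnack by (intro set_integral_mono[OF \<rho>_int const_int]) simp
  then show "mh \<rho> h y \<le> K * \<rho> y * measure lborel (ball (0::'a) h)"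
    by (simp add: const mult_ac)
  have "\<rho> y / K \<le> \<rho> z" if "z \<in> ball y h" for z
    using harnack[of z y] that K by (simp add: dist_commute divide_le_eq mult.commute)
  then have "(LINT z:ball y h|lborel. \<rho> y / K) \<le> mh \<rho> h y"
    unfolding mh_def by (intro set_integral_mono[OF const_int \<rho>_int])
  then show "\<rho> y / K * measure lborel (ball (0::'a) h) \<le> mh \<rho> h y"
    by (simp add: const mult_ac)
qed

lemma nu_h_le_harnack:
  fixes \<rho> :: "'a::euclidean_space \<Rightarrow> real"
  assumes sd: "standing_density \<rho>" and h: "h > 0" and K: "K > 0"
    and harnack: "\<And>y z. dist y z < h \<Longrightarrow> \<rho> z \<le> K * \<rho> y"
    and A: "A \<in> sets borel"
  shows "nu_h \<rho> h A \<le> K\<^sup>2 / (LINT y|lborel. (\<rho> y)\<^sup>2) * (LINT y:A|lborel. (\<rho> y)\<^sup>2)"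
proof (rule nu_h_le[OF sd])
  define V where "V = measure lborel (ball (0::'a) h)"
  define Q where "Q = (LINT y|lborel. (\<rho> y)\<^sup>2)"
  define P where "P = (LINT y:A|lborel. (\<rho> y)\<^sup>2)"
  have "V > 0" "Q > 0"
    using h integral_power2_density_pos[OF sd] by (simp_all add: V_def Q_def)
  moreover have "P \<ge> 0"
    unfolding P_def set_lebesgue_integral_def by (intro Bochner_Integration.integral_nonneg) simp
  ultimately show "K\<^sup>2 / Q * P \<ge> 0"
    by simp
  have mh: "mh \<rho> h y * \<rho> y \<le> K * V * (\<rho> y)\<^sup>2" "V / K * (\<rho> y)\<^sup>2 \<le> mh \<rho> h y * \<rho> y" for y
  proof -
    note mh_harnack_bounds[OF sd h K harnack, of y, folded V_def]
    then have "mh \<rho> h y * \<rho> y \<le> (K * \<rho> y * V) * \<rho> y" "(\<rho> y / K * V) * \<rho> y \<le> mh \<rho> h y * \<rho> y"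
      using less_imp_le[OF standing_density_pos[OF sd, of y]] by (metis mult_right_mono)+
    then show "mh \<rho> h y * \<rho> y \<le> K * V * (\<rho> y)\<^sup>2" "V / K * (\<rho> y)\<^sup>2 \<le> mh \<rho> h y * \<rho> y"
      by (simp_all add: power2_eq_square mult_ac)
  qed
  assume int: "integrable lborel (\<lambda>y. mh \<rho> h y * \<rho> y)"
  have A': "A \<in> sets lborel"
    using A by simp
  have "set_integrable lborel A (\<lambda>y. mh \<rho> h y * \<rho> y)"
    unfolding set_integrable_def by (rule integrable_mult_indicator[OF A' int])
  moreover have "set_integrable lborel A (\<lambda>y. K * V * (\<rho> y)\<^sup>2)"
    unfolding set_integrable_def using integrable_power2_density[OF sd]
    by (intro integrable_mult_indicator[OF A']) simp
  ultimately have "(LINT y:A|lborel. mh \<rho> h y * \<rho> y) \<le> (LINT y:A|lborel. K * V * (\<rho> y)\<^sup>2)"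
    using mh(1) by (rule set_integral_mono)
  also have "\<dots> = K\<^sup>2 / Q * P * (V / K * Q)"
    using \<open>Q > 0\<close> K by (simp add: P_def power2_eq_square field_simps)
  also have "\<dots> \<le> K\<^sup>2 / Q * P * (LINT y|lborel. mh \<rho> h y * \<rho> y)"
  proof (rule mult_left_mono)
    show "V / K * Q \<le> (LINT y|lborel. mh \<rho> h y * \<rho> y)"
      unfolding Q_def using int integrable_power2_density[OF sd] mh(2)
      by (subst integral_mult_right_zero[symmetric]) (intro integral_mono, auto)
  qed fact
  finally show "(LINT y:A|lborel. mh \<rho> h y * \<rho> y) \<le> K\<^sup>2 / Q * P * (LINT y|lborel. mh \<rho> h y * \<rho> y)" .
qed

lemma lborel_integral_translate:
  fixes f :: "'a::euclidean_space \<Rightarrow> real"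
  assumes "f \<in> borel_measurable borel"
  shows "(LINT z|lborel. f (w + z)) = (LINT z|lborel. f z)"
proof -
  have "(LINT z|lborel. f (w + z)) = integral\<^sup>L (distr lborel borel ((+) w)) f"
    using assms by (subst integral_distr) auto
  then show ?thesis
    by (simp add: lborel_distr_plus)
qed

lemma set_integral_le_translate:
  fixes f :: "'a::euclidean_space \<Rightarrow> real"
  assumes f: "integrable lborel f" "\<And>y. f y \<ge> 0" and A: "A \<in> sets borel" and E: "E \<ge> 0"
    and shift: "\<And>y. w + y \<in> A \<Longrightarrow> f (w + y) \<le> E * f y"
  shows "(LINT y:A|lborel. f y) \<le> E * (LINT y|lborel. f y)"
proof -
  have meas: "(\<lambda>y. indicator A y * f y) \<in> borel_measurable borel"
    using A borel_measurable_integrable[OF f(1)] by simp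
  have "(LINT y:A|lborel. f y) = (LINT y|lborel. indicator A (w + y) * f (w + y))"
    unfolding set_lebesgue_integral_def using lborel_integral_translate[OF meas, of w] by simp
  also have "\<dots> \<le> (LINT y|lborel. E * f y)"
    using f E shift by (intro integral_mono') (auto simp: indicator_def)
  also have "\<dots> = E * (LINT y|lborel. f y)"
    by simp
  finally show ?thesis .
qed

lemma mh_translate_le:
  fixes \<rho> :: "'a::euclidean_space \<Rightarrow> real"
  assumes sd: "standing_density \<rho>" and E: "E \<ge> 0"
    and le: "\<And>z. z \<in> ball y h \<Longrightarrow> \<rho> (w + z) \<le> E * \<rho> z"
  shows "mh \<rho> h (w + y) \<le> E * mh \<rho> h y"
proof -
  have meas: "(\<lambda>z. indicator (ball (w + y) h) z * \<rho> z) \<in> borel_measurable borel"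
    using borel_measurable_integrable[OF standing_density_integrable[OF sd]]
    by (intro borel_measurable_times borel_measurable_indicator) auto
  have "mh \<rho> h (w + y) = (LINT z|lborel. indicator (ball (w + y) h) (w + z) * \<rho> (w + z))"
    unfolding mh_def set_lebesgue_integral_def using lborel_integral_translate[OF meas, of w] by simp
  also have "\<dots> = (LINT z|lborel. indicator (ball y h) z * \<rho> (w + z))"
    by (simp add: indicator_def dist_norm)
  also have "\<dots> \<le> (LINT z|lborel. E * (indicator (ball y h) z *\<^sub>R \<rho> z))"
  proof (rule integral_mono')
    show "integrable lborel (\<lambda>z. E * (indicator (ball y h) z *\<^sub>R \<rho> z))"
      using standing_density_set_integrable[OF sd] by (simp add: set_integrable_def)
  qed (use le E less_imp_le[OF standing_density_pos[OF sd]] in \<open>auto simp: indicator_def\<close>)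
  also have "\<dots> = E * mh \<rho> h y"
    by (simp add: mh_def set_lebesgue_integral_def)
  finally show ?thesis .
qed

lemma gaussian_translate_le:
  fixes u z :: "'a::euclidean_space"
  assumes gauss: "\<And>x. \<rho> x = \<beta> * exp (- \<alpha> * (norm x)\<^sup>2)"
    and "\<alpha> \<ge> 0" "\<beta> \<ge> 0" "c \<ge> 0" and u: "norm u = 1" and s: "s \<le> z \<bullet> u"
  shows "\<rho> (c *\<^sub>R u + z) \<le> exp (- \<alpha> * (c\<^sup>2 + 2 * c * s)) * \<rho> z"
proof -
  have "(norm (c *\<^sub>R u + z))\<^sup>2 = (c *\<^sub>R u + z) \<bullet> (c *\<^sub>R u + z)"
    by (simp only: power2_norm_eq_inner)
  also have "\<dots> = c\<^sup>2 * (u \<bullet> u) + 2 * c * (z \<bullet> u) + z \<bullet> z"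
    by (simp add: inner_add_left inner_add_right inner_commute power2_eq_square algebra_simps)
  finally have "(norm (c *\<^sub>R u + z))\<^sup>2 = (norm z)\<^sup>2 + c\<^sup>2 + 2 * c * (z \<bullet> u)"
    using u by (simp add: dot_square_norm)
  moreover have "\<alpha> * (c * s) \<le> \<alpha> * (c * (z \<bullet> u))"
    using assms s by (intro mult_left_mono) auto
  ultimately have "- \<alpha> * (norm (c *\<^sub>R u + z))\<^sup>2 \<le> - \<alpha> * (c\<^sup>2 + 2 * c * s) + - \<alpha> * (norm z)\<^sup>2"
    by (simp add: algebra_simps)
  then show ?thesis
    using \<open>\<beta> \<ge> 0\<close> by (simp add: gauss mult.left_commute mult_left_mono flip: exp_add)
qed

lemma nu_h_gaussian_halfspace_le:
  fixes \<rho> :: "'a::euclidean_space \<Rightarrow> real"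
  assumes sd: "standing_density \<rho>" and gauss: "\<And>x. \<rho> x = \<beta> * exp (- \<alpha> * (norm x)\<^sup>2)"
    and \<alpha>: "\<alpha> > 0" and \<beta>: "\<beta> > 0" and h: "h > 0" and \<tau>: "\<tau> \<ge> 0" and u: "norm u = 1"
  shows "nu_h \<rho> h {y. \<tau> + h \<le> y \<bullet> u} \<le> exp (- 2 * \<alpha> * \<tau> * (\<tau> + h))"
proof (rule nu_h_le[OF sd])
  define c where "c = \<tau> + h"
  define w where "w = c *\<^sub>R u"
  define E\<^sub>m where "E\<^sub>m = exp (- \<alpha> * (c\<^sup>2 + 2 * c * - h))"
  define E\<^sub>\<rho> where "E\<^sub>\<rho> = exp (- \<alpha> * (c\<^sup>2 + 2 * c * 0))"
  have c: "c \<ge> 0"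
    using h \<tau> by (simp add: c_def)
  have mh_shift: "mh \<rho> h (w + y) \<le> E\<^sub>m * mh \<rho> h y" if "0 \<le> y \<bullet> u" for y
  proof (rule mh_translate_le[OF sd])
    fix z assume "z \<in> ball y h"
    then have "- h \<le> (z - y) \<bullet> u"
      using Cauchy_Schwarz_ineq2[of "z - y" u] u by (auto simp: dist_norm norm_minus_commute)
    then have "- h \<le> z \<bullet> u"
      using that by (simp add: inner_diff_left)
    show "\<rho> (w + z) \<le> E\<^sub>m * \<rho> z"
      unfolding w_def E\<^sub>m_def
      by (rule gaussian_translate_le[OF gauss _ _ c u \<open>- h \<le> z \<bullet> u\<close>]) (use \<alpha> \<beta> in auto)
  qed (simp add: E\<^sub>m_def)
  have \<rho>_shift: "\<rho> (w + y) \<le> E\<^sub>\<rho> * \<rho> y" if "0 \<le> y \<bullet> u" for y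
    unfolding w_def E\<^sub>\<rho>_def
    by (rule gaussian_translate_le[OF gauss _ _ c u that]) (use \<alpha> \<beta> in auto)
  have "E\<^sub>m * E\<^sub>\<rho> = exp (- 2 * \<alpha> * \<tau> * (\<tau> + h))"
    by (simp add: E\<^sub>m_def E\<^sub>\<rho>_def c_def power2_eq_square algebra_simps flip: exp_add)
  moreover have "E\<^sub>m * E\<^sub>\<rho> \<ge> 0"
    by (simp add: E\<^sub>m_def E\<^sub>\<rho>_def)
  ultimately show "exp (- 2 * \<alpha> * \<tau> * (\<tau> + h)) \<ge> 0"
    by simp
  assume int: "integrable lborel (\<lambda>y. mh \<rho> h y * \<rho> y)"
  have "(LINT y:{y. \<tau> + h \<le> y \<bullet> u}|lborel. mh \<rho> h y * \<rho> y)
      \<le> (E\<^sub>m * E\<^sub>\<rho>) * (LINT y|lborel. mh \<rho> h y * \<rho> y)"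
  proof (rule set_integral_le_translate[OF int, where w = w])
    fix y assume "w + y \<in> {y. \<tau> + h \<le> y \<bullet> u}"
    then have "0 \<le> y \<bullet> u"
      using u by (simp add: w_def c_def inner_add_left dot_square_norm)
    then have "mh \<rho> h (w + y) * \<rho> (w + y) \<le> (E\<^sub>m * mh \<rho> h y) * (E\<^sub>\<rho> * \<rho> y)"
      using mh_nonneg[OF sd] less_imp_le[OF standing_density_pos[OF sd]]
      by (intro mult_mono mh_shift \<rho>_shift) (auto simp: E\<^sub>m_def)
    then show "mh \<rho> h (w + y) * \<rho> (w + y) \<le> (E\<^sub>m * E\<^sub>\<rho>) * (mh \<rho> h y * \<rho> y)"
      by (simp only: mult_ac)
  qed (use mh_nonneg[OF sd] standing_density_pos[OF sd] \<open>E\<^sub>m * E\<^sub>\<rho> \<ge> 0\<close> in \<open>auto simp: less_imp_le\<close>)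
  with \<open>E\<^sub>m * E\<^sub>\<rho> = _\<close> show "(LINT y:{y. \<tau> + h \<le> y \<bullet> u}|lborel. mh \<rho> h y * \<rho> y)
      \<le> exp (- 2 * \<alpha> * \<tau> * (\<tau> + h)) * (LINT y|lborel. mh \<rho> h y * \<rho> y)"
    by simp
qed

lemma tempered_tv_lower_bound:
  fixes \<rho> :: "'a::euclidean_space \<Rightarrow> real"
  assumes sd: "standing_density \<rho>" and te: "tempered_exp \<rho>"
  shows "\<exists>C>0. \<forall>(n::nat) h \<tau> (x::'a). 0 < h \<and> h \<le> 1 \<and> \<tau> > 0 \<and> norm x \<ge> \<tau> + (real n + 1) * h \<longrightarrow>
    tv_dist (Tn \<rho> h n x) (nu_h \<rho> h) \<ge> 1 - C * (LINT y:{y. norm y \<ge> \<tau>}|lborel. (\<rho> y)\<^sup>2)"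
proof -
  obtain K where K: "K > 0" and harnack: "\<And>y z. dist y z < 1 \<Longrightarrow> \<rho> z \<le> K * \<rho> y"
    using tempered_exp_harnack[OF sd te] by blast
  define C where "C = K\<^sup>2 / (LINT y|lborel. (\<rho> y)\<^sup>2)"
  have "1 - C * (LINT y:{y. norm y \<ge> \<tau>}|lborel. (\<rho> y)\<^sup>2) \<le> tv_dist (Tn \<rho> h n x) (nu_h \<rho> h)"
    if h: "0 < h" "h \<le> 1" and x: "norm x \<ge> \<tau> + (real n + 1) * h" for n h \<tau> and x :: 'a
  proof -
    have "cball x (real n * h) \<subseteq> {y. norm y \<ge> \<tau>}"
    proof
      fix y assume "y \<in> cball x (real n * h)"
      then have "norm x \<le> norm y + real n * h"
        using norm_triangle_sub[of x y] by (simp add: dist_norm)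
      then show "y \<in> {y. norm y \<ge> \<tau>}"
        using x h by (simp add: algebra_simps)
    qed
    moreover have closed: "{y::'a. norm y \<ge> \<tau>} \<in> sets borel"
      by measurable
    ultimately have "1 - nu_h \<rho> h {y. norm y \<ge> \<tau>} \<le> tv_dist (Tn \<rho> h n x) (nu_h \<rho> h)"
      by (rule tv_dist_Tn_nu_h_ge[OF sd h(1), rotated])
    moreover have "nu_h \<rho> h {y. norm y \<ge> \<tau>} \<le> C * (LINT y:{y. norm y \<ge> \<tau>}|lborel. (\<rho> y)\<^sup>2)"
      unfolding C_def using h harnack by (intro nu_h_le_harnack[OF sd h(1) K _ closed]) auto
    ultimately show ?thesis
      by linarith
  qed
  moreover have "C > 0"
    using K integral_power2_density_pos[OF sd] by (simp add: C_def)
  ultimately show ?thesis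
    by blast
qed

lemma gaussian_tv_lower_bound:
  fixes \<rho> :: "'a::euclidean_space \<Rightarrow> real"
  assumes sd: "standing_density \<rho>" and gauss: "\<And>x. \<rho> x = \<beta> * exp (- \<alpha> * (norm x)\<^sup>2)"
    and \<alpha>: "\<alpha> > 0" and \<beta>: "\<beta> > 0"
  shows "\<exists>C>0. \<forall>(n::nat) h \<tau> (x::'a). 0 < h \<and> h \<le> 1 \<and> \<tau> > 0 \<and> norm x \<ge> \<tau> + (real n + 1) * h \<longrightarrow>
    tv_dist (Tn \<rho> h n x) (nu_h \<rho> h) \<ge> 1 - C * exp (- 2 * \<alpha> * \<tau> * (\<tau> - h))"
proof -
  have "1 - exp (- 2 * \<alpha> * \<tau> * (\<tau> - h)) \<le> tv_dist (Tn \<rho> h n x) (nu_h \<rho> h)"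
    if h: "0 < h" and \<tau>: "\<tau> > 0" and x: "norm x \<ge> \<tau> + (real n + 1) * h" for n h \<tau> and x :: 'a
  proof -
    have "(real n + 1) * h > 0"
      using h by simp
    then have "norm x > 0"
      using \<tau> x by linarith
    define u where "u = x /\<^sub>R norm x"
    have u: "norm u = 1" and xu: "x \<bullet> u = norm x"
      using \<open>norm x > 0\<close> by (simp_all add: u_def dot_square_norm power2_eq_square)
    define A where "A = {y. \<tau> + h \<le> y \<bullet> u}"
    have "cball x (real n * h) \<subseteq> A"
    proof
      fix y assume "y \<in> cball x (real n * h)"
      then have "- (real n * h) \<le> (y - x) \<bullet> u"
        using Cauchy_Schwarz_ineq2[of "y - x" u] u by (auto simp: dist_norm norm_minus_commute)
      then show "y \<in> A"
        using x xu by (simp add: A_def inner_diff_left algebra_simps)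
    qed
    moreover have A_borel: "A \<in> sets borel"
      unfolding A_def by measurable
    ultimately have "1 - nu_h \<rho> h A \<le> tv_dist (Tn \<rho> h n x) (nu_h \<rho> h)"
      by (rule tv_dist_Tn_nu_h_ge[OF sd h, rotated])
    moreover have "nu_h \<rho> h A \<le> exp (- 2 * \<alpha> * \<tau> * (\<tau> + h))"
      unfolding A_def using nu_h_gaussian_halfspace_le[OF sd gauss \<alpha> \<beta> h _ u] \<tau> by simp
    moreover have "exp (- 2 * \<alpha> * \<tau> * (\<tau> + h)) \<le> exp (- 2 * \<alpha> * \<tau> * (\<tau> - h))"
      using \<alpha> h \<tau> by (simp add: algebra_simps)
    ultimately show ?thesis
      by linarith
  qed
  then show ?thesis
    by (intro exI[of _ 1]) auto
qed

theorem theorem5p2: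
  fixes \<rho> :: "'a::euclidean_space \<Rightarrow> real" and \<alpha> \<beta> :: real
  assumes "standing_density \<rho>"
  shows "(tempered_exp \<rho> \<longrightarrow>
            (\<exists>C>0. \<forall>(n::nat) h \<tau> (x::'a). 0 < h \<and> h \<le> 1 \<and> \<tau> > 0 \<and> norm x \<ge> \<tau> + (real n + 1) * h \<longrightarrow>
               tv_dist (Tn \<rho> h n x) (nu_h \<rho> h)
                 \<ge> 1 - C * (LINT y:{y. norm y \<ge> \<tau>}|lborel. (\<rho> y)\<^sup>2)))
       \<and> ((\<alpha> > 0 \<and> \<beta> > 0 \<and> (\<forall>x. \<rho> x = \<beta> * exp (- \<alpha> * (norm x)\<^sup>2))) \<longrightarrow>
            (\<exists>C>0. \<forall>(n::nat) h \<tau> (x::'a). 0 < h \<and> h \<le> 1 \<and> \<tau> > 0 \<and> norm x \<ge> \<tau> + (real n + 1) * h \<longrightarrow>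
               tv_dist (Tn \<rho> h n x) (nu_h \<rho> h)
                 \<ge> 1 - C * exp (- 2 * \<alpha> * \<tau> * (\<tau> - h))))"
  using tempered_tv_lower_bound[OF assms] gaussian_tv_lower_bound[OF assms] by blast

end
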